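(* Assume the standing hypotheses on $H$ (Conditions A, B, C, in particular $\Lambda^{\sup}<\infty$) and suppose $k>1$ (equivalently $\gamma>2$). Let $0<T<\infty$, let $h:\mathbb{R}^n\to\mathbb{R}$ be continuous with $\sup_{\mathbb{R}^n}h<\infty$, let $\chi:(0,T)\to\mathbb{R}$ be bounded and continuous, let $\sigma\ge 0$, and for some $m\in\mathbb{R}$ let $Z:[m,\infty)\to[0,\infty)$ be non-increasing and continuous. Let $u$ be upper semicontinuous on $\mathbb{R}^n\times[0,T)$ with $\inf u>m$, be a viscosity sub-solution of $\mathcal{P}_\sigma(t,u,u_t,Du,D^2u)\ge 0$ in $\mathbb{R}^n_T$, and satisfy $u(x,0)\le h(x)$ for all $x\in\mathbb{R}^n$. Fix $z\in\mathbb{R}^n$ and suppose $\sup_{B^R_T}u=o(R^{\beta})$ as $R\to\infty$. (a) If $0\le\sigma\le\gamma/2$ and $\beta=\gamma^*$, then for all $(x,t)\in\mathbb{R}^n_T$: $u(x,t)\le \sup_{\mathbb{R}^n}h+t\sup_{(0,T)}|\chi|$ when $\sigma=0$, and $u(x,t)\le\sup_{\mathbb{R}^n}h$ when $0<\sigma\le\gamma/2$. (b) If $\sigma>\gamma/2$ and $\beta=\sigma^*$, then $u(x,t)\le\sup_{\mathbb{R}^n}h$ for all $(x,t)\in\mathbb{R}^n_T$.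
   Context: Let $n\ge2$, let $S^{n\times n}$ denote the real symmetric $n\times n$ matrices with the usual partial order, $I$ the identity, $O$ the zero matrix, and for a unit vector $e$ let $(e\otimes e)_{ij}=e_ie_j$ (more generally $(p\otimes q)_{ij}=p_iq_j$). $H:\mathbb{R}^n\times S^{n\times n}\to\mathbb{R}$ is continuous and satisfies: Condition A: $H(q,X)\le H(q,Y)$ whenever $X\le Y$, and $H(q,O)=0$ for all $q$. Condition B: there is $k_1\ge0$ with $H(\theta q,X)=|\theta|^{k_1}H(q,X)$ for all $\theta\in\mathbb{R}$ and $H(q,\theta X)=\theta H(q,X)$ for all $\theta>0$. Condition C: $\max_{|e|=1}H(e,-I)<0<\min_{|e|=1}H(e,I)$ and $\Lambda^{\sup}:=\sup_{\lambda\in\mathbb{R}}\max_{|e|=1}H(e,\lambda e\otimes e+I)<\infty$. Set $k=k_1+1$, $\gamma=k+1$, and for $k>1$, $\gamma^*=\gamma/(\gamma-2)$; for $\sigma>1$, $\sigma^*=\sigma/(\sigma-1)$. $\mathbb{R}^n_T=\mathbb{R}^n\times(0,T)$, and for fixed $z$, $B^R_T=\{(x,t):|x-z|\le R,\ 0<t<T\}$. The operator is $\mathcal{P}_\sigma(t,u,u_t,Du,D^2u)=H(Du,D^2u+Z(u)Du\otimes Du)+\chi(t)|Du|^\sigma-u_t$, with the convention $|q|^0=1$. Solutions, sub-solutions and super-solutions are in the viscosity sense. *)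

theory Defs
  imports "HOL-Analysis.Analysis" "HOL-Library.Landau_Symbols"
begin

definition tensor :: "real^'n \<Rightarrow> real^'n \<Rightarrow> real^'n^'n" where
  "tensor p q = (\<chi> i j. p $ i * q $ j)"

definition symm :: "real^'n^'n \<Rightarrow> bool" where
  "symm X \<longleftrightarrow> transpose X = X"

definition mat_le :: "real^'n^'n \<Rightarrow> real^'n^'n \<Rightarrow> bool" where
  "mat_le X Y \<longleftrightarrow> (\<forall>v. 0 \<le> v \<bullet> ((Y - X) *v v))"

text \<open>|q|^s with the convention |q|^0 = 1.\<close>
definition pw :: "real \<Rightarrow> real \<Rightarrow> real" where
  "pw r s = (if s = 0 then 1 else r powr s)"

definition usc_on :: "'a::topological_space set \<Rightarrow> ('a \<Rightarrow> real) \<Rightarrow> bool" where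
  "usc_on D f \<longleftrightarrow> (\<forall>p\<in>D. \<forall>a. f p < a \<longrightarrow> (\<forall>\<^sub>F q in at p within D. f q < a))"

text \<open>Standing conditions A, B, C on H (H is only relevant on R^n x S^{n x n}).\<close>
definition cond_H :: "(real^'n \<Rightarrow> real^'n^'n \<Rightarrow> real) \<Rightarrow> real \<Rightarrow> bool" where
  "cond_H H k1 \<longleftrightarrow>
     continuous_on (UNIV \<times> {X. symm X}) (\<lambda>p. H (fst p) (snd p)) \<and>
     \<comment> \<open>Condition A\<close>
     (\<forall>q X Y. symm X \<and> symm Y \<and> mat_le X Y \<longrightarrow> H q X \<le> H q Y) \<and>
     (\<forall>q. H q 0 = 0) \<and>
     \<comment> \<open>Condition B\<close>
     0 \<le> k1 \<and>
     (\<forall>\<theta> q X. symm X \<longrightarrow> H (\<theta> *\<^sub>R q) X = pw \<bar>\<theta>\<bar> k1 * H q X) \<and>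
     (\<forall>\<theta> q X. symm X \<and> 0 < \<theta> \<longrightarrow> H q (\<theta> *\<^sub>R X) = \<theta> * H q X) \<and>
     \<comment> \<open>Condition C\<close>
     (SUP e\<in>sphere 0 1. H e (- mat 1)) < 0 \<and>
     0 < (INF e\<in>sphere 0 1. H e (mat 1)) \<and>
     bdd_above {H e (lam *\<^sub>R tensor e e + mat 1) | lam e. norm e = 1}"

definition C21 :: "(real^'n \<Rightarrow> real \<Rightarrow> real) \<Rightarrow> (real^'n \<Rightarrow> real \<Rightarrow> real^'n)
    \<Rightarrow> (real^'n \<Rightarrow> real \<Rightarrow> real^'n^'n) \<Rightarrow> (real^'n \<Rightarrow> real \<Rightarrow> real) \<Rightarrow> bool" where
  "C21 \<phi> D\<phi> D2\<phi> \<phi>t \<longleftrightarrow>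
     (\<forall>x t. ((\<lambda>y. \<phi> y t) has_derivative (\<lambda>h. D\<phi> x t \<bullet> h)) (at x)) \<and>
     (\<forall>x t. ((\<lambda>y. D\<phi> y t) has_derivative (\<lambda>h. D2\<phi> x t *v h)) (at x)) \<and>
     (\<forall>x t. ((\<lambda>s. \<phi> x s) has_real_derivative \<phi>t x t) (at t)) \<and>
     continuous_on UNIV (\<lambda>p. D\<phi> (fst p) (snd p)) \<and>
     continuous_on UNIV (\<lambda>p. D2\<phi> (fst p) (snd p)) \<and>
     continuous_on UNIV (\<lambda>p. \<phi>t (fst p) (snd p))"

definition P_op :: "(real^'n \<Rightarrow> real^'n^'n \<Rightarrow> real) \<Rightarrow> (real \<Rightarrow> real) \<Rightarrow> (real \<Rightarrow> real)
    \<Rightarrow> real \<Rightarrow> real \<Rightarrow> real \<Rightarrow> real \<Rightarrow> real^'n \<Rightarrow> real^'n^'n \<Rightarrow> real" where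
  "P_op H Z chi \<sigma> t r rt q X = H q (X + Z r *\<^sub>R tensor q q) + chi t * pw (norm q) \<sigma> - rt"

definition visc_sub :: "(real^'n \<Rightarrow> real^'n^'n \<Rightarrow> real) \<Rightarrow> (real \<Rightarrow> real) \<Rightarrow> (real \<Rightarrow> real)
    \<Rightarrow> real \<Rightarrow> real \<Rightarrow> (real^'n \<Rightarrow> real \<Rightarrow> real) \<Rightarrow> bool" where
  "visc_sub H Z chi \<sigma> T u \<longleftrightarrow>
     usc_on (UNIV \<times> {0<..<T}) (\<lambda>p. u (fst p) (snd p)) \<and>
     (\<forall>\<phi> D\<phi> D2\<phi> \<phi>t x0 t0.
        C21 \<phi> D\<phi> D2\<phi> \<phi>t \<and> t0 \<in> {0<..<T} \<and>
        (\<exists>r>0. \<forall>y s. s \<in> {0<..<T} \<and> dist (y, s) (x0, t0) < r \<longrightarrow>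
                   u y s - \<phi> y s \<le> u x0 t0 - \<phi> x0 t0)
        \<longrightarrow> 0 \<le> P_op H Z chi \<sigma> t0 (u x0 t0) (\<phi>t x0 t0) (D\<phi> x0 t0) (D2\<phi> x0 t0))"

end

theory Submission
  imports Defs
begin

text \<open>Compare u with the barrier
  \<Phi>(x,t) = K + a t + \<delta> e^t (1 + |x - z|^2)^(\<beta>/2) + \<eta>/(T - t),  K \<ge> sup h.
  The growth hypothesis keeps u below \<Phi> far from z, the term \<eta>/(T - t) keeps it below near t = T,
  and the initial condition at t = 0; so if u exceeds \<Phi> somewhere, u - \<Phi> has an interior
  maximum, where \<Phi> is an admissible test function. By the homogeneity of H and \<Lambda>^sup < \<infinity>,
  the operator evaluated on \<Phi> is at most \<Lambda> |D\<Phi>|^k1 c + sup |\<chi>| |D\<Phi>|^\<sigma>, where D\<Phi> = c (x - z).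
  For \<beta> \<le> \<gamma>* (and \<beta> \<le> \<sigma>* when \<sigma> > \<gamma>/2) and small \<delta> both terms are a constant plus a small
  multiple of the \<delta>-term of \<Phi>, hence below \<Phi>_t, contradicting the sub-solution property.
  Letting the parameters tend to 0 leaves sup h, plus t sup |\<chi>| when \<sigma> = 0, as |Du|^0 = 1.\<close>

lemma tensor_mult_vec: "tensor v w *v h = (w \<bullet> h) *\<^sub>R v"
  by (simp add: tensor_def vec_eq_iff matrix_vector_mult_def inner_vec_def sum_distrib_left
      mult.commute mult.left_commute)

lemma tensor_scaleR_self: "tensor (c *\<^sub>R v) (c *\<^sub>R v) = c\<^sup>2 *\<^sub>R tensor v v"
  by (simp add: tensor_def vec_eq_iff power2_eq_square)

lemma symm_add: "symm A \<Longrightarrow> symm B \<Longrightarrow> symm (A + B)"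
  by (simp add: symm_def transpose_def vec_eq_iff)

lemma symm_scaleR: "symm A \<Longrightarrow> symm (c *\<^sub>R A)"
  by (simp add: symm_def transpose_scalar)

lemma symm_mat: "symm (mat c)"
  by (simp add: symm_def)

lemma symm_tensor_self: "symm (tensor v v)"
  by (simp add: symm_def tensor_def transpose_def vec_eq_iff mult.commute)

lemma continuous_on_tensor_self [continuous_intros]:
  "continuous_on S f \<Longrightarrow> continuous_on S (\<lambda>x. tensor (f x) (f x))"
  unfolding tensor_def by (intro continuous_intros)

subsection \<open>Upper semicontinuous functions\<close>

lemma usc_on_compact_has_max:
  assumes K: "compact K" "K \<noteq> {}" "K \<subseteq> D" and f: "usc_on D f"
  shows "\<exists>p\<in>K. \<forall>q\<in>K. f q \<le> f p"
proof (rule ccontr)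
  assume "\<not> ?thesis"
  then obtain g where g: "\<And>p. p \<in> K \<Longrightarrow> g p \<in> K \<and> f p < f (g p)"
    by (metis not_le)
  have "\<exists>S. open S \<and> p \<in> S \<and> (\<forall>x\<in>S \<inter> D. f x < f (g p))" if p: "p \<in> K" for p
  proof -
    have "\<forall>\<^sub>F q in at p within D. f q < f (g p)"
      using f g[OF p] p K(3) unfolding usc_on_def by blast
    then obtain S where "open S" "p \<in> S" "\<And>x. x \<in> S \<Longrightarrow> x \<in> D \<Longrightarrow> x \<noteq> p \<Longrightarrow> f x < f (g p)"
      unfolding eventually_at_topological by blast
    with g[OF p] show ?thesis by (intro exI[of _ S]) auto
  qed
  then obtain N where N: "\<And>p. p \<in> K \<Longrightarrow> open (N p) \<and> p \<in> N p \<and> (\<forall>x\<in>N p \<inter> D. f x < f (g p))"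
    by metis
  obtain K' where K': "K' \<subseteq> K" "finite K'" "K \<subseteq> \<Union>(N ` K')"
    using compactE_image[OF K(1), of K N] N by blast
  with K(2) have "K' \<noteq> {}" by auto
  let ?m = "Max ((\<lambda>p. f (g p)) ` K')"
  have le_m: "f (g p) \<le> ?m" if "p \<in> K'" for p
    using K'(2) that by simp
  have "?m \<in> (\<lambda>p. f (g p)) ` K'"
    using K'(2) \<open>K' \<noteq> {}\<close> by (intro Max_in) auto
  then obtain p0 where p0: "p0 \<in> K'" "?m = f (g p0)" by blast
  have "g p0 \<in> K" using g p0(1) K'(1) by blast
  then obtain p1 where p1: "p1 \<in> K'" "g p0 \<in> N p1" using K'(3) by blast
  have "f (g p0) < f (g p1)" using N[of p1] p1 K'(1) \<open>g p0 \<in> K\<close> K(3) by blast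
  with le_m[OF p1(1)] p0(2) show False by simp
qed

lemma usc_on_diff_continuous:
  assumes "usc_on D f" "continuous_on D g"
  shows "usc_on D (\<lambda>p. f p - g p)"
  unfolding usc_on_def
proof (intro ballI allI impI)
  fix p a assume p: "p \<in> D" and lt: "f p - g p < a"
  define e where "e = a - (f p - g p)"
  have e: "e > 0" using lt by (simp add: e_def)
  have "\<forall>\<^sub>F q in at p within D. f q < f p + e/2"
    using assms(1) p e unfolding usc_on_def by simp
  moreover have "\<forall>\<^sub>F q in at p within D. dist (g q) (g p) < e/2"
    using assms(2) p e unfolding continuous_on_def tendsto_iff by (metis half_gt_zero)
  ultimately show "\<forall>\<^sub>F q in at p within D. f q - g q < a"
    by eventually_elim (simp add: dist_real_def e_def abs_less_iff, argo)
qed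

subsection \<open>The Hamiltonian on rank-one perturbations of the identity\<close>

lemma cond_H_scalar_plus_tensor_le:
  fixes H :: "real^'n \<Rightarrow> real^'n^'n \<Rightarrow> real"
  assumes HC: "cond_H H k1" and k1: "0 < k1" and c: "0 < c"
    and H_le: "\<And>lam e. norm e = 1 \<Longrightarrow> H e (lam *\<^sub>R tensor e e + mat 1) \<le> \<Lambda>"
  shows "H (c *\<^sub>R v) (c *\<^sub>R mat 1 + \<mu> *\<^sub>R tensor v v) \<le> \<Lambda> * ((c * norm v) powr k1 * c)"
proof -
  have hom_grad: "\<And>\<theta> q X. symm X \<Longrightarrow> H (\<theta> *\<^sub>R q) X = pw \<bar>\<theta>\<bar> k1 * H q X"
   and hom_hess: "\<And>\<theta> q X. symm X \<Longrightarrow> 0 < \<theta> \<Longrightarrow> H q (\<theta> *\<^sub>R X) = \<theta> * H q X"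
    using HC unfolding cond_H_def by blast+
  show ?thesis
  proof (cases "v = 0")
    case True
    have "symm (c *\<^sub>R mat 1 + \<mu> *\<^sub>R tensor v v)"
      by (intro symm_add symm_scaleR symm_mat symm_tensor_self)
    from hom_grad[OF this, of 0 v] True k1 show ?thesis by (simp add: pw_def)
  next
    case False
    define r where "r = norm v"
    define e where "e = (1/r) *\<^sub>R v"
    define lam where "lam = \<mu> * r\<^sup>2 / c"
    have r: "0 < r" using False by (simp add: r_def)
    have v: "v = r *\<^sub>R e" and e: "norm e = 1" using r by (simp_all add: e_def r_def)
    have Y: "symm (lam *\<^sub>R tensor e e + mat 1)"
      by (intro symm_add symm_scaleR symm_mat symm_tensor_self)
    have "c *\<^sub>R mat 1 + \<mu> *\<^sub>R tensor v v = c *\<^sub>R (lam *\<^sub>R tensor e e + mat 1)"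
      using c by (simp add: v tensor_scaleR_self lam_def scaleR_add_right algebra_simps)
    then have "H (c *\<^sub>R v) (c *\<^sub>R mat 1 + \<mu> *\<^sub>R tensor v v)
        = H ((c * r) *\<^sub>R e) (c *\<^sub>R (lam *\<^sub>R tensor e e + mat 1))"
      by (simp add: v)
    also have "\<dots> = (c * r) powr k1 * c * H e (lam *\<^sub>R tensor e e + mat 1)"
      using hom_grad[OF symm_scaleR[OF Y, of c], of "c * r" e] hom_hess[OF Y c, of e] k1 c r
      by (simp add: pw_def)
    also have "\<dots> \<le> (c * r) powr k1 * c * \<Lambda>"
      using H_le[OF e] c r by (intro mult_left_mono) auto
    finally show ?thesis by (simp add: r_def mult_ac)
  qed
qed

subsection \<open>The spatial weight\<close>

definition weight :: "real^'n \<Rightarrow> real^'n \<Rightarrow> real" where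
  "weight z y = 1 + (y - z) \<bullet> (y - z)"

lemma weight_ge_1: "1 \<le> weight z y"
  by (simp add: weight_def)

lemma weight_pos: "0 < weight z y"
  using weight_ge_1[of z y] by linarith

lemma norm_sq_le_weight: "(norm (y - z))\<^sup>2 \<le> weight z y"
  by (simp add: weight_def power2_norm_eq_inner)

lemma norm_powr_le_weight_powr:
  assumes "0 \<le> \<beta>"
  shows "norm (y - z) powr \<beta> \<le> weight z y powr (\<beta>/2)"
proof -
  have "norm (y - z) powr \<beta> = ((norm (y - z))\<^sup>2) powr (\<beta>/2)"
    by (cases "y = z") (simp_all add: powr_powr flip: powr_numeral)
  also have "\<dots> \<le> weight z y powr (\<beta>/2)"
    using assms norm_sq_le_weight by (intro powr_mono2) auto
  finally show ?thesis .
qed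

lemma continuous_on_weight_powr [continuous_intros]:
  "continuous_on S f \<Longrightarrow> continuous_on S (\<lambda>x. weight z (f x) powr c)"
  unfolding weight_def
  using weight_pos[unfolded weight_def] by (intro continuous_intros) (auto simp: less_le)

lemma has_derivative_weight: "(weight z has_derivative (\<lambda>h. 2 * ((y - z) \<bullet> h))) (at y)"
proof -
  have "((\<lambda>y. 1 + (y - z) \<bullet> (y - z)) has_derivative
      (\<lambda>h. 0 + ((y - z) \<bullet> (h - 0) + (h - 0) \<bullet> (y - z)))) (at y)"
    by (intro derivative_intros)
  then show ?thesis unfolding weight_def by (simp add: inner_commute)
qed

lemma has_derivative_weight_powr:
  "((\<lambda>y. weight z y powr c) has_derivative
     (\<lambda>h. c * weight z y powr (c - 1) * (2 * ((y - z) \<bullet> h)))) (at y)"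
proof -
  have "((\<lambda>y. weight z y powr c) has_derivative
      (\<lambda>h. weight z y powr c * (0 * ln (weight z y) + (2 * ((y - z) \<bullet> h)) * c / weight z y))) (at y)"
    by (rule has_derivative_powr[OF has_derivative_weight has_derivative_const weight_pos]) simp
  then show ?thesis
    using weight_pos[of z y] by (simp add: powr_diff field_simps)
qed

lemma scalar_plus_tensor_mult_vec:
  "(a *\<^sub>R mat 1 + b *\<^sub>R tensor v v) *v h = a *\<^sub>R h + (b * (v \<bullet> h)) *\<^sub>R v"
  by (simp add: matrix_vector_mult_add_rdistrib tensor_mult_vec flip: scaleR_matrix_vector_assoc)

lemma has_derivative_weight_powr_gradient:
  "((\<lambda>y. (\<beta> * weight z y powr (\<beta>/2 - 1)) *\<^sub>R (y - z)) has_derivative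
     (\<lambda>h. ((\<beta> * weight z y powr (\<beta>/2 - 1)) *\<^sub>R mat 1
           + (\<beta> * (\<beta> - 2) * weight z y powr (\<beta>/2 - 2)) *\<^sub>R tensor (y - z) (y - z)) *v h)) (at y)"
  unfolding scalar_plus_tensor_mult_vec
proof (rule has_derivative_eq_rhs)
  show "((\<lambda>y. (\<beta> * weight z y powr (\<beta>/2 - 1)) *\<^sub>R (y - z)) has_derivative
     (\<lambda>h. (\<beta> * weight z y powr (\<beta>/2 - 1)) *\<^sub>R (h - 0) +
          (\<beta> * ((\<beta>/2 - 1) * weight z y powr (\<beta>/2 - 1 - 1) * (2 * ((y - z) \<bullet> h)))) *\<^sub>R (y - z))) (at y)"
    by (intro derivative_intros has_derivative_weight_powr)
  have coeff: "\<beta> * ((\<beta>/2 - 1) * P * (2 * x)) = \<beta> * (\<beta> - 2) * P * x" for P x :: real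
    by (simp add: field_simps)
  show "(\<lambda>h. (\<beta> * weight z y powr (\<beta>/2 - 1)) *\<^sub>R (h - 0) +
          (\<beta> * ((\<beta>/2 - 1) * weight z y powr (\<beta>/2 - 1 - 1) * (2 * ((y - z) \<bullet> h)))) *\<^sub>R (y - z))
    = (\<lambda>h. (\<beta> * weight z y powr (\<beta>/2 - 1)) *\<^sub>R h
          + (\<beta> * (\<beta> - 2) * weight z y powr (\<beta>/2 - 2) * ((y - z) \<bullet> h)) *\<^sub>R (y - z))"
    by (simp add: diff_divide_distrib coeff)
qed

lemma C21_weight_test_function:
  fixes z :: "real^'n"
  assumes q: "\<And>s. (q has_real_derivative q' s) (at s)" and q': "continuous_on UNIV q'"
  shows "C21 (\<lambda>y s. A + a * s + \<delta> * exp s * weight z y powr (\<beta>/2) + \<eta> * q s)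
             (\<lambda>y s. (\<delta> * exp s) *\<^sub>R ((\<beta> * weight z y powr (\<beta>/2 - 1)) *\<^sub>R (y - z)))
             (\<lambda>y s. (\<delta> * exp s) *\<^sub>R ((\<beta> * weight z y powr (\<beta>/2 - 1)) *\<^sub>R mat 1
                     + (\<beta> * (\<beta> - 2) * weight z y powr (\<beta>/2 - 2)) *\<^sub>R tensor (y - z) (y - z)))
             (\<lambda>y s. a + \<delta> * exp s * weight z y powr (\<beta>/2) + \<eta> * q' s)"
  unfolding C21_def
proof (intro conjI allI)
  fix x :: "real^'n" and t :: real
  show "((\<lambda>y. A + a * t + \<delta> * exp t * weight z y powr (\<beta>/2) + \<eta> * q t) has_derivative
      (\<lambda>h. ((\<delta> * exp t) *\<^sub>R ((\<beta> * weight z x powr (\<beta>/2 - 1)) *\<^sub>R (x - z))) \<bullet> h)) (at x)"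
  proof (rule has_derivative_eq_rhs)
    show "((\<lambda>y. A + a * t + \<delta> * exp t * weight z y powr (\<beta>/2) + \<eta> * q t) has_derivative
      (\<lambda>h. 0 + \<delta> * exp t * ((\<beta>/2) * weight z x powr (\<beta>/2 - 1) * (2 * ((x - z) \<bullet> h))) + 0)) (at x)"
      by (intro derivative_intros has_derivative_weight_powr)
  qed (simp add: fun_eq_iff)
  show "((\<lambda>y. (\<delta> * exp t) *\<^sub>R ((\<beta> * weight z y powr (\<beta>/2 - 1)) *\<^sub>R (y - z))) has_derivative
      (\<lambda>h. ((\<delta> * exp t) *\<^sub>R ((\<beta> * weight z x powr (\<beta>/2 - 1)) *\<^sub>R mat 1
          + (\<beta> * (\<beta> - 2) * weight z x powr (\<beta>/2 - 2)) *\<^sub>R tensor (x - z) (x - z))) *v h)) (at x)"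
    using has_derivative_scaleR_right[OF has_derivative_weight_powr_gradient, of "\<delta> * exp t"]
    by (simp add: scaleR_matrix_vector_assoc)
  show "((\<lambda>s. A + a * s + \<delta> * exp s * weight z x powr (\<beta>/2) + \<eta> * q s) has_real_derivative
      a + \<delta> * exp t * weight z x powr (\<beta>/2) + \<eta> * q' t) (at t)"
    by (auto intro!: derivative_eq_intros q)
next
  show "continuous_on UNIV (\<lambda>p. (\<delta> * exp (snd p)) *\<^sub>R
      ((\<beta> * weight z (fst p) powr (\<beta>/2 - 1)) *\<^sub>R (fst p - z)))"
    and "continuous_on UNIV (\<lambda>p. (\<delta> * exp (snd p)) *\<^sub>R ((\<beta> * weight z (fst p) powr (\<beta>/2 - 1)) *\<^sub>R mat 1
      + (\<beta> * (\<beta> - 2) * weight z (fst p) powr (\<beta>/2 - 2)) *\<^sub>R tensor (fst p - z) (fst p - z)))"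
    and "continuous_on UNIV (\<lambda>p. a + \<delta> * exp (snd p) * weight z (fst p) powr (\<beta>/2) + \<eta> * q' (snd p))"
    by (intro continuous_intros continuous_on_compose2[OF q']; simp)+
qed

lemma inverse_le_second_order_taylor:
  fixes a b :: real
  assumes a: "0 < a" and b: "a/2 \<le> b"
  shows "1/b \<le> 1/a + (a - b)/a\<^sup>2 + 2 * (a - b)\<^sup>2/a^3"
proof -
  have "0 < b" using a b by linarith
  then have "1/b - 1/a - (a - b)/a\<^sup>2 = (a - b)\<^sup>2/(a\<^sup>2 * b)"
    using a by (simp add: field_simps power2_eq_square)
  also have "\<dots> \<le> (a - b)\<^sup>2/(a\<^sup>2 * (a/2))"
    using a b by (intro divide_left_mono mult_pos_pos) auto
  also have "\<dots> = 2 * (a - b)\<^sup>2/a^3"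
    using a by (simp add: field_simps power2_eq_square power3_eq_cube)
  finally show ?thesis by linarith
qed

subsection \<open>Power inequalities\<close>

lemma exists_small_powr_le:
  fixes p L \<epsilon> :: real
  assumes p: "0 < p" and L: "0 \<le> L" and \<epsilon>: "0 < \<epsilon>"
  shows "\<exists>W>0. \<forall>w. 0 < w \<and> w \<le> W \<longrightarrow> L * w powr p \<le> \<epsilon>"
proof -
  define W where "W = (\<epsilon>/(L + 1)) powr (1/p)"
  have W: "0 < W" using L \<epsilon> by (simp add: W_def)
  have "L * w powr p \<le> \<epsilon>" if w: "0 < w" "w \<le> W" for w
  proof -
    have "w powr p \<le> W powr p" using w p by (intro powr_mono2) auto
    also have "\<dots> = \<epsilon>/(L + 1)" using L \<epsilon> p by (simp add: W_def powr_powr)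
    finally have "L * w powr p \<le> L * (\<epsilon>/(L + 1))" using L by (rule mult_left_mono)
    also have "\<dots> \<le> \<epsilon>" using L \<epsilon> by (simp add: field_simps)
    finally show ?thesis .
  qed
  with W show ?thesis by blast
qed

lemma powr_le_const_plus_powr:
  fixes Y A \<sigma> s :: real
  assumes \<sigma>: "0 < \<sigma>" "\<sigma> \<le> s" and A: "0 < A" and Y: "0 \<le> Y"
  shows "Y powr \<sigma> \<le> A + A powr (1 - s/\<sigma>) * Y powr s"
proof (cases "Y powr \<sigma> \<le> A")
  case True
  then show ?thesis by (simp add: add_increasing2)
next
  case False
  then have YA: "A < Y powr \<sigma>" by simp
  then have Y: "0 < Y" using A Y by (cases "Y = 0") auto
  have "Y powr s = Y powr \<sigma> * (Y powr \<sigma>) powr (s/\<sigma> - 1)"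
    using \<sigma> Y by (simp add: powr_powr powr_add[symmetric] algebra_simps)
  also have "\<dots> \<ge> Y powr \<sigma> * A powr (s/\<sigma> - 1)"
    using YA A \<sigma> by (intro mult_left_mono powr_mono2) (auto simp: field_simps)
  finally have "A powr (1 - s/\<sigma>) * (Y powr \<sigma> * A powr (s/\<sigma> - 1)) \<le> A powr (1 - s/\<sigma>) * Y powr s"
    by (intro mult_left_mono) auto
  also have "A powr (1 - s/\<sigma>) * (Y powr \<sigma> * A powr (s/\<sigma> - 1)) = Y powr \<sigma>"
    using A by (simp add: mult.left_commute powr_add[symmetric])
  finally show ?thesis using A by simp
qed

text \<open>In the lemmas below \<open>w * \<beta> * S powr (\<beta>/2 - 1) * r\<close> is the length of the spatial gradient
  of \<open>w * weight z x powr (\<beta>/2)\<close>, where \<open>S = weight z x\<close> and \<open>r = norm (x - z)\<close>; the goal is to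
  compare its powers with the size \<open>w * S powr (\<beta>/2)\<close> of the function itself.\<close>

lemma gradient_length_powr_le:
  fixes w \<beta> S r p :: real
  assumes w: "0 < w" and S: "1 \<le> S" and r: "0 \<le> r" "r\<^sup>2 \<le> S" and \<beta>: "0 < \<beta>" and p: "0 \<le> p"
  shows "(w * \<beta> * S powr (\<beta>/2 - 1) * r) powr p \<le> (w * \<beta>) powr p * S powr (p * (\<beta> - 1)/2)"
proof -
  have "r \<le> S powr (1/2)"
    using r S by (simp add: powr_half_sqrt real_le_rsqrt)
  then have "(w * \<beta> * S powr (\<beta>/2 - 1) * r) powr p \<le> (w * \<beta> * S powr (\<beta>/2 - 1) * S powr (1/2)) powr p"
    using w \<beta> r p by (intro powr_mono2 mult_left_mono) auto
  also have "\<dots> = (w * \<beta>) powr p * S powr ((\<beta>/2 - 1) * p + 1/2 * p)"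
    using w \<beta> S by (simp add: powr_mult powr_powr powr_add)
  also have "(\<beta>/2 - 1) * p + 1/2 * p = p * (\<beta> - 1)/2"
    by (simp add: algebra_simps)
  finally show ?thesis .
qed

lemma gradient_term_le:
  fixes w \<beta> S r k1 :: real
  assumes w: "0 < w" and S: "1 \<le> S" and r: "0 \<le> r" "r\<^sup>2 \<le> S" and \<beta>: "0 < \<beta>" and k1: "0 \<le> k1"
    and k1\<beta>: "k1 * \<beta> \<le> k1 + 2"
  shows "(w * \<beta> * S powr (\<beta>/2 - 1) * r) powr k1 * (w * \<beta> * S powr (\<beta>/2 - 1))
         \<le> \<beta> powr (k1 + 1) * w powr k1 * (w * S powr (\<beta>/2))"
proof -
  have "(w * \<beta> * S powr (\<beta>/2 - 1) * r) powr k1 * (w * \<beta> * S powr (\<beta>/2 - 1))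
        \<le> (w * \<beta>) powr k1 * S powr (k1 * (\<beta> - 1)/2) * (w * \<beta> * S powr (\<beta>/2 - 1))"
    using gradient_length_powr_le[OF w S r \<beta> k1] \<beta> w by (intro mult_right_mono) auto
  also have "\<dots> = \<beta> powr (k1 + 1) * w powr k1 * w * S powr (k1 * (\<beta> - 1)/2 + (\<beta>/2 - 1))"
    using w \<beta> by (simp add: powr_mult powr_add mult_ac)
  also have "\<dots> \<le> \<beta> powr (k1 + 1) * w powr k1 * w * S powr (\<beta>/2)"
    using S k1\<beta> w by (intro mult_left_mono powr_mono) (auto simp: field_simps)
  finally show ?thesis by (simp add: mult_ac)
qed

lemma gradient_pw_le:
  fixes w \<beta> S r \<sigma> s A :: real
  assumes w: "0 < w" and S: "1 \<le> S" and r: "0 \<le> r" "r\<^sup>2 \<le> S" and \<beta>: "0 < \<beta>"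
    and \<sigma>: "0 < \<sigma>" "\<sigma> \<le> s" and s\<beta>: "s * (\<beta> - 1) \<le> \<beta>" and A: "0 < A"
  shows "pw (w * \<beta> * S powr (\<beta>/2 - 1) * r) \<sigma>
         \<le> A + A powr (1 - s/\<sigma>) * \<beta> powr s * w powr (s - 1) * (w * S powr (\<beta>/2))"
proof -
  let ?Y = "w * \<beta> * S powr (\<beta>/2 - 1) * r"
  have "?Y powr s \<le> (w * \<beta>) powr s * S powr (s * (\<beta> - 1)/2)"
    using gradient_length_powr_le[OF w S r \<beta>] \<sigma> by simp
  also have "\<dots> \<le> (w * \<beta>) powr s * S powr (\<beta>/2)"
    using S s\<beta> by (intro mult_left_mono powr_mono) auto
  also have "\<dots> = \<beta> powr s * w powr (s - 1) * (w * S powr (\<beta>/2))"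
    using w \<beta> by (simp add: powr_mult powr_diff)
  finally have "A powr (1 - s/\<sigma>) * ?Y powr s
      \<le> A powr (1 - s/\<sigma>) * (\<beta> powr s * w powr (s - 1) * (w * S powr (\<beta>/2)))"
    by (rule mult_left_mono) simp
  moreover have "pw ?Y \<sigma> \<le> A + A powr (1 - s/\<sigma>) * ?Y powr s"
    using powr_le_const_plus_powr[OF \<sigma> A] w \<beta> r \<sigma> by (simp add: pw_def)
  ultimately show ?thesis by (simp add: mult_ac)
qed

subsection \<open>Comparison with the barrier\<close>

locale growing_subsolution =
  fixes H :: "real^'n \<Rightarrow> real^'n^'n \<Rightarrow> real" and k1 \<Lambda> :: real
    and chi Z :: "real \<Rightarrow> real" and C \<sigma> T M :: real
    and u :: "real^'n \<Rightarrow> real \<Rightarrow> real" and z :: "real^'n" and \<beta> :: real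
  assumes HC: "cond_H H k1" and k1_pos: "0 < k1" and T_pos: "0 < T"
    and H_le: "\<And>lam e. norm e = 1 \<Longrightarrow> H e (lam *\<^sub>R tensor e e + mat 1) \<le> \<Lambda>"
    and \<Lambda>_nonneg: "0 \<le> \<Lambda>"
    and chi_le: "\<And>t. t \<in> {0<..<T} \<Longrightarrow> \<bar>chi t\<bar> \<le> C"
    and u_usc: "usc_on (UNIV \<times> {0..<T}) (\<lambda>p. u (fst p) (snd p))"
    and u_sub: "visc_sub H Z chi \<sigma> T u"
    and u_init: "\<And>x. u x 0 \<le> M"
    and growth_fin: "\<forall>\<^sub>F R in at_top. bdd_above {u x t | x t. norm (x - z) \<le> R \<and> 0 < t \<and> t < T}"
    and growth: "(\<lambda>R. Sup {u x t | x t. norm (x - z) \<le> R \<and> 0 < t \<and> t < T}) \<in> o(\<lambda>R. R powr \<beta>)"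
begin

abbreviation cylinder_values :: "real \<Rightarrow> real set" where
  "cylinder_values R \<equiv> {u x t | x t. norm (x - z) \<le> R \<and> 0 < t \<and> t < T}"

lemma C_nonneg: "0 \<le> C"
  using chi_le[of "T/2"] T_pos by simp

definition barrier :: "real \<Rightarrow> real \<Rightarrow> real \<Rightarrow> real \<Rightarrow> real^'n \<Rightarrow> real \<Rightarrow> real" where
  "barrier K a \<delta> \<eta> x t = K + a * t + \<delta> * exp t * weight z x powr (\<beta>/2) + \<eta> / (T - t)"

text \<open>\<open>barrier_margin a \<delta>\<close> says that the barrier is a strict classical super-solution: with
  \<open>w = \<delta> * exp t\<close>, \<open>S = weight z x\<close> and \<open>r = norm (x - z)\<close>, its spatial gradient is \<open>c *\<^sub>R (x - z)\<close>
  with \<open>c = w * \<beta> * S powr (\<beta>/2 - 1)\<close>, on which \<open>H\<close> is at most \<open>\<Lambda> * (c * r) powr k1 * c\<close>, and its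
  time derivative is at least \<open>a + w * S powr (\<beta>/2)\<close>.\<close>

definition barrier_margin :: "real \<Rightarrow> real \<Rightarrow> bool" where
  "barrier_margin a \<delta> \<longleftrightarrow> (\<forall>w S r. 0 < w \<and> w \<le> \<delta> * exp T \<and> 1 \<le> S \<and> 0 \<le> r \<and> r\<^sup>2 \<le> S \<longrightarrow>
     \<Lambda> * ((w * \<beta> * S powr (\<beta>/2 - 1) * r) powr k1 * (w * \<beta> * S powr (\<beta>/2 - 1)))
       + C * pw (w * \<beta> * S powr (\<beta>/2 - 1) * r) \<sigma> < a + w * S powr (\<beta>/2))"

lemma barrier_ge:
  assumes "0 \<le> a" "0 \<le> \<delta>" "0 \<le> t"
  shows "K + \<eta> / (T - t) \<le> barrier K a \<delta> \<eta> x t"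
  using assms by (simp add: barrier_def)

lemma continuous_on_barrier:
  "continuous_on (UNIV \<times> {0..<T}) (\<lambda>p. barrier K a \<delta> \<eta> (fst p) (snd p))"
  unfolding barrier_def by (intro continuous_intros) auto

lemma eventually_below_barrier_far:
  assumes \<beta>: "1 \<le> \<beta>" and \<delta>: "0 < \<delta>" and a: "0 \<le> a" and \<eta>: "0 \<le> \<eta>"
  shows "\<forall>\<^sub>F R in at_top. \<forall>y. \<forall>s\<in>{0<..<T}. R \<le> norm (y - z) \<longrightarrow> u y s < barrier K a \<delta> \<eta> y s"
proof -
  have "\<forall>\<^sub>F \<rho> in at_top. norm (Sup (cylinder_values \<rho>)) \<le> \<delta>/2 * norm (\<rho> powr \<beta>)"
    by (rule landau_o.smallD[OF growth]) (use \<delta> in simp)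
  then have "\<forall>\<^sub>F \<rho> in at_top. norm (Sup (cylinder_values \<rho>)) \<le> \<delta>/2 * norm (\<rho> powr \<beta>)
      \<and> bdd_above (cylinder_values \<rho>) \<and> max 1 (2 * \<bar>K\<bar>/\<delta> + 1) \<le> \<rho>"
    using growth_fin by (intro eventually_conj eventually_ge_at_top)
  then obtain R0 where R0: "\<And>\<rho>. R0 \<le> \<rho> \<Longrightarrow> norm (Sup (cylinder_values \<rho>)) \<le> \<delta>/2 * norm (\<rho> powr \<beta>)
      \<and> bdd_above (cylinder_values \<rho>) \<and> max 1 (2 * \<bar>K\<bar>/\<delta> + 1) \<le> \<rho>"
    unfolding eventually_at_top_linorder by blast
  have "u y s < barrier K a \<delta> \<eta> y s" if y: "R0 \<le> norm (y - z)" and s: "s \<in> {0<..<T}" for y s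
  proof -
    define \<rho> where "\<rho> = norm (y - z)"
    note R = R0[OF y, folded \<rho>_def]
    have "u y s \<le> Sup (cylinder_values \<rho>)"
      using R s by (intro cSup_upper) (auto simp: \<rho>_def)
    also have "\<dots> \<le> norm (Sup (cylinder_values \<rho>))" by simp
    also have "\<dots> \<le> \<delta>/2 * \<rho> powr \<beta>" using R by simp
    finally have u: "u y s \<le> \<delta>/2 * \<rho> powr \<beta>" .
    have "\<rho> \<le> \<rho> powr \<beta>"
      using R \<beta> powr_mono[of 1 \<beta> \<rho>] by simp
    then have "\<delta>/2 * (2 * \<bar>K\<bar>/\<delta> + 1) \<le> \<delta>/2 * \<rho> powr \<beta>"
      using R \<delta> by (intro mult_left_mono) auto
    moreover have "\<delta>/2 * (2 * \<bar>K\<bar>/\<delta> + 1) = \<bar>K\<bar> + \<delta>/2"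
      using \<delta> by (simp add: field_simps)
    ultimately have K: "\<bar>K\<bar> < \<delta>/2 * \<rho> powr \<beta>"
      using \<delta> by linarith
    have "\<rho> powr \<beta> \<le> weight z y powr (\<beta>/2)"
      using norm_powr_le_weight_powr[of \<beta> y z] \<beta> by (simp add: \<rho>_def)
    also have "\<dots> \<le> exp s * weight z y powr (\<beta>/2)"
      using s by (intro mult_right_mono[of 1 "exp s", simplified]) auto
    finally have "\<delta> * \<rho> powr \<beta> \<le> \<delta> * exp s * weight z y powr (\<beta>/2)"
      using \<delta> by (simp add: mult.assoc)
    moreover have "0 \<le> a * s" "0 \<le> \<eta>/(T - s)" using a \<eta> s by auto
    ultimately show ?thesis using u K unfolding barrier_def by linarith
  qed
  then show ?thesis
    unfolding eventually_at_top_linorder by (metis order_trans)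
qed

lemma below_barrier_near_final_time:
  assumes bdd: "bdd_above (cylinder_values R)" and a: "0 \<le> a" and \<delta>: "0 \<le> \<delta>" and \<eta>: "0 < \<eta>"
  obtains T' where "0 \<le> T'" "T' < T"
    "\<And>y s. norm (y - z) \<le> R \<Longrightarrow> T' < s \<Longrightarrow> s < T \<Longrightarrow> u y s < barrier K a \<delta> \<eta> y s"
proof
  define \<tau> where "\<tau> = \<eta> / (\<bar>Sup (cylinder_values R) - K\<bar> + 1)"
  have \<tau>: "0 < \<tau>" using \<eta> by (simp add: \<tau>_def)
  show "0 \<le> max 0 (T - \<tau>)" "max 0 (T - \<tau>) < T" using \<tau> T_pos by auto
  fix y s assume y: "norm (y - z) \<le> R" and s: "max 0 (T - \<tau>) < s" "s < T"
  have "u y s \<le> Sup (cylinder_values R)"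
    using bdd y s by (intro cSup_upper) auto
  moreover have "\<eta>/\<tau> < \<eta>/(T - s)"
    using s \<eta> by (intro divide_strict_left_mono) auto
  moreover have "\<eta>/\<tau> = \<bar>Sup (cylinder_values R) - K\<bar> + 1"
    using \<eta> by (simp add: \<tau>_def)
  moreover have "K + \<eta>/(T - s) \<le> barrier K a \<delta> \<eta> y s"
    using barrier_ge a \<delta> s by simp
  ultimately show "u y s < barrier K a \<delta> \<eta> y s" by linarith
qed

lemma exceeding_barrier_has_interior_max:
  assumes \<beta>: "1 \<le> \<beta>" and \<delta>: "0 < \<delta>" and a: "0 \<le> a" and \<eta>: "0 < \<eta>" and K: "M \<le> K"
    and t1: "t1 \<in> {0<..<T}" and above: "barrier K a \<delta> \<eta> x1 t1 < u x1 t1"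
  obtains x0 t0 where "t0 \<in> {0<..<T}"
    "\<And>y s. s \<in> {0<..<T} \<Longrightarrow> u y s - barrier K a \<delta> \<eta> y s \<le> u x0 t0 - barrier K a \<delta> \<eta> x0 t0"
proof -
  let ?f = "\<lambda>p. u (fst p) (snd p) - barrier K a \<delta> \<eta> (fst p) (snd p)"
  have "\<forall>\<^sub>F R in at_top. (\<forall>y. \<forall>s\<in>{0<..<T}. R \<le> norm (y - z) \<longrightarrow> u y s < barrier K a \<delta> \<eta> y s)
      \<and> bdd_above (cylinder_values R) \<and> norm (x1 - z) \<le> R"
    using eventually_below_barrier_far[OF \<beta> \<delta> a] \<eta> growth_fin
    by (intro eventually_conj eventually_ge_at_top) auto
  then obtain R where R: "(\<forall>y. \<forall>s\<in>{0<..<T}. R \<le> norm (y - z) \<longrightarrow> u y s < barrier K a \<delta> \<eta> y s)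
      \<and> bdd_above (cylinder_values R) \<and> norm (x1 - z) \<le> R"
    unfolding eventually_at_top_linorder by blast
  then have far: "\<And>y s. s \<in> {0<..<T} \<Longrightarrow> R \<le> norm (y - z) \<Longrightarrow> u y s < barrier K a \<delta> \<eta> y s"
    and bdd: "bdd_above (cylinder_values R)" and x1: "norm (x1 - z) \<le> R"
    by auto
  obtain T' where T': "0 \<le> T'" "T' < T"
    and near: "\<And>y s. norm (y - z) \<le> R \<Longrightarrow> T' < s \<Longrightarrow> s < T \<Longrightarrow> u y s < barrier K a \<delta> \<eta> y s"
    using below_barrier_near_final_time[OF bdd a less_imp_le[OF \<delta>] \<eta>] by blast
  define D where "D = cball z R \<times> {0..max t1 T'}"
  have D: "compact D" "(x1, t1) \<in> D" "D \<subseteq> UNIV \<times> {0..<T}"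
    using x1 t1 T' by (auto simp: D_def dist_norm norm_minus_commute intro: compact_Times)
  obtain p0 where p0: "p0 \<in> D" "\<And>p. p \<in> D \<Longrightarrow> ?f p \<le> ?f p0"
    using usc_on_compact_has_max[OF D(1) _ D(3) usc_on_diff_continuous[OF u_usc continuous_on_barrier]] D(2)
    by blast
  then have pos: "0 < ?f p0"
    using p0(2)[OF D(2)] above by simp
  have "snd p0 \<noteq> 0"
  proof
    assume "snd p0 = 0"
    with pos have "barrier K a \<delta> \<eta> (fst p0) 0 < u (fst p0) 0" by simp
    moreover have "K + \<eta>/T \<le> barrier K a \<delta> \<eta> (fst p0) 0"
      using barrier_ge[OF a less_imp_le[OF \<delta>]] by fastforce
    moreover have "0 < \<eta>/T" using \<eta> T_pos by simp
    ultimately show False using u_init[of "fst p0"] K by linarith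
  qed
  then have t0: "snd p0 \<in> {0<..<T}"
    using p0(1) D(3) by (auto simp: D_def)
  have "?f (y, s) \<le> ?f p0" if s: "s \<in> {0<..<T}" for y s
  proof (cases "(y, s) \<in> D")
    case True
    then show ?thesis by (rule p0(2))
  next
    case False
    then have "R < norm (y - z) \<or> norm (y - z) \<le> R \<and> max t1 T' < s"
      using s by (auto simp: D_def dist_norm norm_minus_commute)
    then have "u y s < barrier K a \<delta> \<eta> y s"
      using far near s by fastforce
    with pos show ?thesis by simp
  qed
  with t0 show thesis
    by (intro that[of "snd p0" "fst p0"]) auto
qed

lemma P_op_weight_test_function_neg:
  assumes \<beta>: "0 < \<beta>" and \<delta>: "0 < \<delta>" and margin: "barrier_margin a \<delta>" and t0: "t0 \<in> {0<..<T}"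
    and \<theta>: "0 \<le> \<theta>"
  shows "P_op H Z chi \<sigma> t0 \<rho> (a + \<delta> * exp t0 * weight z x0 powr (\<beta>/2) + \<theta>)
      ((\<delta> * exp t0) *\<^sub>R ((\<beta> * weight z x0 powr (\<beta>/2 - 1)) *\<^sub>R (x0 - z)))
      ((\<delta> * exp t0) *\<^sub>R ((\<beta> * weight z x0 powr (\<beta>/2 - 1)) *\<^sub>R mat 1
        + (\<beta> * (\<beta> - 2) * weight z x0 powr (\<beta>/2 - 2)) *\<^sub>R tensor (x0 - z) (x0 - z))) < 0"
proof -
  define w where "w = \<delta> * exp t0"
  define S where "S = weight z x0"
  define c where "c = w * \<beta> * S powr (\<beta>/2 - 1)"
  define v where "v = x0 - z"
  have w: "0 < w" "w \<le> \<delta> * exp T" and S: "1 \<le> S" and c: "0 < c"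
    using \<delta> \<beta> t0 weight_pos[of z x0] by (auto simp: w_def S_def c_def weight_ge_1)
  have r: "0 \<le> norm v" "(norm v)\<^sup>2 \<le> S"
    using norm_sq_le_weight by (auto simp: S_def v_def)
  have grad: "(\<delta> * exp t0) *\<^sub>R ((\<beta> * weight z x0 powr (\<beta>/2 - 1)) *\<^sub>R (x0 - z)) = c *\<^sub>R v"
    by (simp add: c_def w_def S_def v_def mult.assoc)
  have "(\<delta> * exp t0) *\<^sub>R ((\<beta> * weight z x0 powr (\<beta>/2 - 1)) *\<^sub>R mat 1
        + (\<beta> * (\<beta> - 2) * weight z x0 powr (\<beta>/2 - 2)) *\<^sub>R tensor (x0 - z) (x0 - z))
      + Z \<rho> *\<^sub>R tensor (c *\<^sub>R v) (c *\<^sub>R v)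
      = c *\<^sub>R mat 1 + (w * (\<beta> * (\<beta> - 2) * S powr (\<beta>/2 - 2)) + Z \<rho> * c\<^sup>2) *\<^sub>R tensor v v"
    unfolding tensor_scaleR_self
    by (simp add: c_def w_def S_def v_def scaleR_add_right algebra_simps)
  then have "H (c *\<^sub>R v) ((\<delta> * exp t0) *\<^sub>R ((\<beta> * weight z x0 powr (\<beta>/2 - 1)) *\<^sub>R mat 1
        + (\<beta> * (\<beta> - 2) * weight z x0 powr (\<beta>/2 - 2)) *\<^sub>R tensor (x0 - z) (x0 - z))
      + Z \<rho> *\<^sub>R tensor (c *\<^sub>R v) (c *\<^sub>R v)) \<le> \<Lambda> * ((c * norm v) powr k1 * c)"
    by (simp only:) (rule cond_H_scalar_plus_tensor_le[OF HC k1_pos c H_le])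
  moreover have "chi t0 * pw (norm (c *\<^sub>R v)) \<sigma> \<le> C * pw (c * norm v) \<sigma>"
    unfolding norm_scaleR abs_of_pos[OF c] using chi_le[OF t0]
    by (intro mult_right_mono) (auto simp: pw_def abs_le_iff)
  moreover have "\<Lambda> * ((c * norm v) powr k1 * c) + C * pw (c * norm v) \<sigma> < a + w * S powr (\<beta>/2)"
    using margin w S r unfolding barrier_margin_def c_def by blast
  ultimately show ?thesis
    using \<theta> unfolding P_op_def grad by (simp add: w_def S_def)
qed

lemma barrier_margin_excludes_interior_max:
  assumes \<beta>: "0 < \<beta>" and \<delta>: "0 < \<delta>" and \<eta>: "0 < \<eta>" and margin: "barrier_margin a \<delta>"
    and t0: "t0 \<in> {0<..<T}"
    and max: "\<And>y s. s \<in> {0<..<T} \<Longrightarrow> u y s - barrier K a \<delta> \<eta> y s \<le> u x0 t0 - barrier K a \<delta> \<eta> x0 t0"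
  shows False
proof -
  define d where "d = T - t0"
  have d: "0 < d" using t0 by (simp add: d_def)
  \<comment> \<open>the second-order Taylor polynomial of \<open>1/(T - s)\<close> at \<open>t0\<close> dominates it near \<open>t0\<close>\<close>
  define q where "q = (\<lambda>s. 1/d + (1/d\<^sup>2) * (s - t0) + (2/d^3) * (s - t0)\<^sup>2)"
  define q' where "q' = (\<lambda>s. 1/d\<^sup>2 + 2 * (2/d^3) * (s - t0))"
  define \<Psi> where "\<Psi> = (\<lambda>y s. K + a * s + \<delta> * exp s * weight z y powr (\<beta>/2) + \<eta> * q s)"
  define D\<Psi> where "D\<Psi> = (\<lambda>y s. (\<delta> * exp s) *\<^sub>R ((\<beta> * weight z y powr (\<beta>/2 - 1)) *\<^sub>R (y - z)))"
  define D2\<Psi> where "D2\<Psi> = (\<lambda>y s. (\<delta> * exp s) *\<^sub>R ((\<beta> * weight z y powr (\<beta>/2 - 1)) *\<^sub>R mat 1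
      + (\<beta> * (\<beta> - 2) * weight z y powr (\<beta>/2 - 2)) *\<^sub>R tensor (y - z) (y - z)))"
  define \<Psi>t where "\<Psi>t = (\<lambda>y s. a + \<delta> * exp s * weight z y powr (\<beta>/2) + \<eta> * q' s)"
  have "C21 \<Psi> D\<Psi> D2\<Psi> \<Psi>t"
    unfolding \<Psi>_def D\<Psi>_def D2\<Psi>_def \<Psi>t_def
    by (rule C21_weight_test_function)
      (use d in \<open>auto intro!: derivative_eq_intros continuous_intros simp: q_def q'_def field_simps\<close>)
  moreover have "\<exists>r>0. \<forall>y s. s \<in> {0<..<T} \<and> dist (y, s) (x0, t0) < r \<longrightarrow>
      u y s - \<Psi> y s \<le> u x0 t0 - \<Psi> x0 t0"
  proof (intro exI[of _ "d/2"] conjI allI impI)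
    fix y s assume ys: "s \<in> {0<..<T} \<and> dist (y, s) (x0, t0) < d/2"
    then have "\<bar>s - t0\<bar> < d/2"
      using dist_snd_le[of "(y, s)" "(x0, t0)"] by (simp add: dist_real_def)
    then have "d/2 \<le> T - s"
      unfolding d_def abs_less_iff by auto
    then have "1/(T - s) \<le> 1/d + (d - (T - s))/d\<^sup>2 + 2 * (d - (T - s))\<^sup>2/d^3"
      by (rule inverse_le_second_order_taylor[OF d])
    also have "\<dots> = q s"
      by (simp add: q_def d_def)
    finally have "1/(T - s) \<le> q s" .
    then have "\<eta> * (1/(T - s)) \<le> \<eta> * q s"
      using \<eta> by (intro mult_left_mono) auto
    then have "barrier K a \<delta> \<eta> y s \<le> \<Psi> y s"
      by (simp add: barrier_def \<Psi>_def)
    moreover have "\<Psi> x0 t0 = barrier K a \<delta> \<eta> x0 t0"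
      by (simp add: barrier_def \<Psi>_def q_def d_def)
    ultimately show "u y s - \<Psi> y s \<le> u x0 t0 - \<Psi> x0 t0"
      using max[of s y] ys by simp
  qed (use d in simp)
  ultimately have "0 \<le> P_op H Z chi \<sigma> t0 (u x0 t0) (\<Psi>t x0 t0) (D\<Psi> x0 t0) (D2\<Psi> x0 t0)"
    using u_sub t0 unfolding visc_sub_def by blast
  moreover have "P_op H Z chi \<sigma> t0 (u x0 t0) (\<Psi>t x0 t0) (D\<Psi> x0 t0) (D2\<Psi> x0 t0) < 0"
    unfolding \<Psi>t_def D\<Psi>_def D2\<Psi>_def
    by (rule P_op_weight_test_function_neg[OF \<beta> \<delta> margin t0]) (use \<eta> d in \<open>simp add: q'_def\<close>)
  ultimately show False by simp
qed

lemma le_barrier: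
  assumes \<beta>: "1 \<le> \<beta>" and \<delta>: "0 < \<delta>" and a: "0 \<le> a" and \<eta>: "0 < \<eta>" and K: "M \<le> K"
    and margin: "barrier_margin a \<delta>" and t: "t \<in> {0<..<T}"
  shows "u x t \<le> barrier K a \<delta> \<eta> x t"
proof (rule ccontr)
  assume "\<not> ?thesis"
  then have "barrier K a \<delta> \<eta> x t < u x t" by simp
  then obtain t0 x0 where "t0 \<in> {0<..<T}"
    "\<And>y s. s \<in> {0<..<T} \<Longrightarrow> u y s - barrier K a \<delta> \<eta> y s \<le> u x0 t0 - barrier K a \<delta> \<eta> x0 t0"
    by (rule exceeding_barrier_has_interior_max[OF \<beta> \<delta> a \<eta> K t]) blast
  moreover have "0 < \<beta>" using \<beta> by simp
  ultimately show False
    by (intro barrier_margin_excludes_interior_max[OF _ \<delta> \<eta> margin])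
qed

lemma barrier_margin_for_small_delta:
  assumes \<beta>: "1 \<le> \<beta>" and k1\<beta>: "k1 * \<beta> \<le> k1 + 2" and p: "0 < p" and L: "0 \<le> L"
    and pw_le: "\<And>w S r. 0 < w \<Longrightarrow> 1 \<le> S \<Longrightarrow> 0 \<le> r \<Longrightarrow> r\<^sup>2 \<le> S \<Longrightarrow>
      pw (w * \<beta> * S powr (\<beta>/2 - 1) * r) \<sigma> \<le> B + L * w powr p * (w * S powr (\<beta>/2))"
    and \<epsilon>: "0 < \<epsilon>"
  shows "\<exists>W>0. \<forall>\<delta>. \<delta> * exp T \<le> W \<longrightarrow> barrier_margin (C * B + \<epsilon>) \<delta>"
proof -
  obtain W1 where W1: "0 < W1" "\<And>w. 0 < w \<and> w \<le> W1 \<Longrightarrow> \<Lambda> * \<beta> powr (k1 + 1) * w powr k1 \<le> 1/3"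
    using exists_small_powr_le[OF k1_pos, of "\<Lambda> * \<beta> powr (k1 + 1)" "1/3"] \<Lambda>_nonneg by auto
  obtain W2 where W2: "0 < W2" "\<And>w. 0 < w \<and> w \<le> W2 \<Longrightarrow> C * L * w powr p \<le> 1/3"
    using exists_small_powr_le[OF p, of "C * L" "1/3"] C_nonneg L by auto
  have "barrier_margin (C * B + \<epsilon>) \<delta>" if \<delta>W: "\<delta> * exp T \<le> min W1 W2" for \<delta>
    unfolding barrier_margin_def
  proof (intro allI impI, elim conjE)
    fix w S r :: real assume w: "0 < w" "w \<le> \<delta> * exp T" and S: "1 \<le> S" and r: "0 \<le> r" "r\<^sup>2 \<le> S"
    let ?c = "w * \<beta> * S powr (\<beta>/2 - 1)"
    have wS: "0 < w * S powr (\<beta>/2)" using w S by simp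
    have "\<Lambda> * ((?c * r) powr k1 * ?c) \<le> \<Lambda> * (\<beta> powr (k1 + 1) * w powr k1 * (w * S powr (\<beta>/2)))"
      using gradient_term_le[OF w(1) S r _ _ k1\<beta>] \<beta> k1_pos \<Lambda>_nonneg by (intro mult_left_mono) auto
    also have "\<dots> = (\<Lambda> * \<beta> powr (k1 + 1) * w powr k1) * (w * S powr (\<beta>/2))"
      by (simp add: mult_ac)
    also have "\<dots> \<le> 1/3 * (w * S powr (\<beta>/2))"
      using W1(2)[of w] w \<delta>W wS by (intro mult_right_mono) auto
    finally have H_part: "\<Lambda> * ((?c * r) powr k1 * ?c) \<le> 1/3 * (w * S powr (\<beta>/2))" .
    have "C * pw (?c * r) \<sigma> \<le> C * (B + L * w powr p * (w * S powr (\<beta>/2)))"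
      using pw_le[OF w(1) S r] C_nonneg by (rule mult_left_mono)
    also have "\<dots> = C * B + C * L * w powr p * (w * S powr (\<beta>/2))"
      by (simp add: algebra_simps)
    also have "\<dots> \<le> C * B + 1/3 * (w * S powr (\<beta>/2))"
      using W2(2)[of w] w \<delta>W wS by (intro add_left_mono mult_right_mono) auto
    finally have chi_part: "C * pw (?c * r) \<sigma> \<le> C * B + 1/3 * (w * S powr (\<beta>/2))" .
    show "\<Lambda> * ((?c * r) powr k1 * ?c) + C * pw (?c * r) \<sigma> < C * B + \<epsilon> + w * S powr (\<beta>/2)"
      using H_part chi_part wS \<epsilon> by linarith
  qed
  with W1 W2 show ?thesis
    by (intro exI[of _ "min W1 W2"]) auto
qed

lemma le_initial_bound_add_time_mult:
  assumes \<beta>: "1 \<le> \<beta>" and k1\<beta>: "k1 * \<beta> \<le> k1 + 2" and p: "0 < p" and L: "0 \<le> L" and B: "0 \<le> B"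
    and pw_le: "\<And>w S r. 0 < w \<Longrightarrow> 1 \<le> S \<Longrightarrow> 0 \<le> r \<Longrightarrow> r\<^sup>2 \<le> S \<Longrightarrow>
      pw (w * \<beta> * S powr (\<beta>/2 - 1) * r) \<sigma> \<le> B + L * w powr p * (w * S powr (\<beta>/2))"
    and t: "t \<in> {0<..<T}"
  shows "u x t \<le> M + t * (C * B)"
proof (rule field_le_epsilon)
  fix e :: real assume e: "0 < e"
  define \<epsilon> where "\<epsilon> = e/3"
  define a where "a = C * B + \<epsilon>/T"
  have \<epsilon>: "0 < \<epsilon>" and a: "0 \<le> a"
    using e T_pos C_nonneg B by (auto simp: \<epsilon>_def a_def)
  have "0 < \<epsilon>/T" using \<epsilon> T_pos by simp
  then obtain W where W: "0 < W" "\<And>\<delta>. \<delta> * exp T \<le> W \<Longrightarrow> barrier_margin a \<delta>"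
    using barrier_margin_for_small_delta[OF \<beta> k1\<beta> p L pw_le] unfolding a_def by blast
  define \<delta> where "\<delta> = min (W / exp T) (\<epsilon> / (exp t * weight z x powr (\<beta>/2)))"
  have \<delta>: "0 < \<delta>"
    using W \<epsilon> weight_pos[of z x] by (simp add: \<delta>_def)
  have "\<delta> \<le> W / exp T"
    by (simp add: \<delta>_def)
  then have "\<delta> * exp T \<le> W"
    by (simp add: field_simps)
  then have "barrier_margin a \<delta>"
    by (rule W(2))
  moreover have \<delta>x: "\<delta> * exp t * weight z x powr (\<beta>/2) \<le> \<epsilon>"
    using weight_pos[of z x] pos_le_divide_eq[of "exp t * weight z x powr (\<beta>/2)" \<delta> \<epsilon>]
    by (simp add: \<delta>_def mult.assoc)
  ultimately have "u x t \<le> barrier M a \<delta> (\<epsilon> * (T - t)) x t"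
    by (intro le_barrier[OF \<beta> \<delta> a _ order_refl _ t]) (use \<epsilon> t in simp)
  also have "\<dots> = M + t * (C * B) + \<epsilon>/T * t + \<delta> * exp t * weight z x powr (\<beta>/2) + \<epsilon>"
    using t by (simp add: barrier_def a_def, simp add: algebra_simps)
  also have "\<epsilon>/T * t \<le> \<epsilon>"
    using t \<epsilon> by (simp add: field_simps)
  finally show "u x t \<le> M + t * (C * B) + e"
    using \<delta>x by (simp add: \<epsilon>_def)
qed

lemma le_initial_bound_add_time:
  assumes \<sigma>: "\<sigma> = 0" and \<beta>: "1 \<le> \<beta>" and k1\<beta>: "k1 * \<beta> \<le> k1 + 2" and t: "t \<in> {0<..<T}"
  shows "u x t \<le> M + t * C"
  using le_initial_bound_add_time_mult[OF \<beta> k1\<beta> zero_less_one order_refl zero_le_one _ t] \<sigma>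
  by (simp add: pw_def)

lemma le_initial_bound:
  assumes \<sigma>: "0 < \<sigma>" "\<sigma> \<le> s" and s: "1 < s" and s\<beta>: "s * (\<beta> - 1) \<le> \<beta>"
    and \<beta>: "1 \<le> \<beta>" and k1\<beta>: "k1 * \<beta> \<le> k1 + 2" and t: "t \<in> {0<..<T}"
  shows "u x t \<le> M"
proof (rule field_le_epsilon)
  fix e :: real assume e: "0 < e"
  define A where "A = e / (t * C + 1)"
  have tC: "0 \<le> t * C" using t C_nonneg by simp
  with e have A: "0 < A" by (simp add: A_def)
  have "pw (w * \<beta> * S powr (\<beta>/2 - 1) * r) \<sigma>
      \<le> A + A powr (1 - s/\<sigma>) * \<beta> powr s * w powr (s - 1) * (w * S powr (\<beta>/2))"
    if "0 < w" "1 \<le> S" "0 \<le> r" "r\<^sup>2 \<le> S" for w S r :: real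
    using gradient_pw_le[OF that _ \<sigma> s\<beta> A] \<beta> by simp
  then have "u x t \<le> M + t * (C * A)"
    using s A
    by (intro le_initial_bound_add_time_mult[where p = "s - 1" and L = "A powr (1 - s/\<sigma>) * \<beta> powr s",
          OF \<beta> k1\<beta> _ _ _ _ t]) auto
  also have "t * (C * A) \<le> e"
    using e tC by (simp add: A_def field_simps)
  finally show "u x t \<le> M + e" by simp
qed

end

lemma cond_H_rank_one_bound:
  assumes "cond_H H k1"
  obtains \<Lambda> where "0 \<le> \<Lambda>" "\<And>lam e. norm e = 1 \<Longrightarrow> H e (lam *\<^sub>R tensor e e + mat 1) \<le> \<Lambda>"
proof -
  have "bdd_above {H e (lam *\<^sub>R tensor e e + mat 1) | lam e. norm e = 1}"
    using assms unfolding cond_H_def by (elim conjE) assumption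
  then obtain \<Lambda> where \<Lambda>: "\<And>lam e. norm e = 1 \<Longrightarrow> H e (lam *\<^sub>R tensor e e + mat 1) \<le> \<Lambda>"
    unfolding bdd_above_def by blast
  show thesis
  proof (rule that)
    show "0 \<le> max \<Lambda> 0" by simp
    show "H e (lam *\<^sub>R tensor e e + mat 1) \<le> max \<Lambda> 0" if "norm e = 1" for lam e
      using \<Lambda>[OF that, of lam] by simp
  qed
qed

lemma abs_le_SUP_of_bounded:
  fixes f :: "'a \<Rightarrow> real"
  assumes "bounded (f ` A)" "x \<in> A"
  shows "\<bar>f x\<bar> \<le> (SUP s\<in>A. \<bar>f s\<bar>)"
proof -
  obtain B where "\<forall>y\<in>f ` A. norm y \<le> B"
    using assms(1) unfolding bounded_iff by blast
  then have "bdd_above ((\<lambda>s. \<bar>f s\<bar>) ` A)"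
    by (auto simp: bdd_above_def)
  with assms(2) show ?thesis by (intro cSUP_upper)
qed

text \<open>Only the boundedness of \<open>h\<close> and \<open>chi\<close> enters.\<close>

theorem theorem2p6:
  fixes H :: "real^'n \<Rightarrow> real^'n^'n \<Rightarrow> real"
    and k1 T \<sigma> m \<beta> :: real
    and h :: "real^'n \<Rightarrow> real"
    and chi Z :: "real \<Rightarrow> real"
    and u :: "real^'n \<Rightarrow> real \<Rightarrow> real"
    and z :: "real^'n"
  defines "\<gamma> \<equiv> (k1 + 1) + 1"
  defines "\<gamma>star \<equiv> \<gamma> / (\<gamma> - 2)"
  defines "\<sigma>star \<equiv> \<sigma> / (\<sigma> - 1)"
  assumes n2: "CARD('n) \<ge> 2"
    and HC: "cond_H H k1"
    and k_gt1: "k1 + 1 > 1"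
    and T: "0 < T"
    and h_cont: "continuous_on UNIV h" and h_bdd: "bdd_above (range h)"
    and chi_cont: "continuous_on {0<..<T} chi" and chi_bdd: "bounded (chi ` {0<..<T})"
    and \<sigma>: "0 \<le> \<sigma>"
    and Z_cont: "continuous_on {m..} Z"
    and Z_nonneg: "\<forall>s\<in>{m..}. 0 \<le> Z s"
    and Z_noninc: "\<forall>a b. m \<le> a \<and> a \<le> b \<longrightarrow> Z b \<le> Z a"
    and u_usc: "usc_on (UNIV \<times> {0..<T}) (\<lambda>p. u (fst p) (snd p))"
    and u_inf: "\<exists>c>m. \<forall>x. \<forall>t\<in>{0..<T}. c \<le> u x t"
    and u_sub: "visc_sub H Z chi \<sigma> T u"
    and u_init: "\<forall>x. u x 0 \<le> h x"
    and growth_fin: "\<forall>\<^sub>F R in at_top. bdd_above {u x t | x t. norm (x - z) \<le> R \<and> 0 < t \<and> t < T}"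
    and growth: "(\<lambda>R. Sup {u x t | x t. norm (x - z) \<le> R \<and> 0 < t \<and> t < T})
                   \<in> o(\<lambda>R. R powr \<beta>)"
  shows "(\<sigma> = 0 \<and> \<beta> = \<gamma>star \<longrightarrow>
            (\<forall>x. \<forall>t\<in>{0<..<T}. u x t \<le> Sup (range h) + t * (SUP s\<in>{0<..<T}. \<bar>chi s\<bar>)))
       \<and> (0 < \<sigma> \<and> \<sigma> \<le> \<gamma> / 2 \<and> \<beta> = \<gamma>star \<longrightarrow>
            (\<forall>x. \<forall>t\<in>{0<..<T}. u x t \<le> Sup (range h)))
       \<and> (\<sigma> > \<gamma> / 2 \<and> \<beta> = \<sigma>star \<longrightarrow>
            (\<forall>x. \<forall>t\<in>{0<..<T}. u x t \<le> Sup (range h)))"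
proof -
  have k1: "0 < k1" using k_gt1 by simp
  obtain \<Lambda> where \<Lambda>: "0 \<le> \<Lambda>" "\<And>lam e. norm e = 1 \<Longrightarrow> H e (lam *\<^sub>R tensor e e + mat 1) \<le> \<Lambda>"
    using cond_H_rank_one_bound[OF HC] by blast
  have "u x 0 \<le> Sup (range h)" for x
    using u_init[rule_format, of x] cSup_upper[OF _ h_bdd, of "h x"] by simp
  then interpret growing_subsolution H k1 \<Lambda> chi Z "SUP s\<in>{0<..<T}. \<bar>chi s\<bar>" \<sigma> T "Sup (range h)" u z \<beta>
    using HC k1 T \<Lambda> abs_le_SUP_of_bounded[OF chi_bdd] u_usc u_sub growth_fin growth
    by unfold_locales auto
  have \<gamma>: "\<gamma> = k1 + 2" by (simp add: \<gamma>_def)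
  have \<gamma>star: "\<gamma>star = (k1 + 2)/k1" "1 \<le> \<gamma>star" "k1 * \<gamma>star \<le> k1 + 2"
    "\<gamma>/2 * (\<gamma>star - 1) \<le> \<gamma>star"
    using k1 by (auto simp: \<gamma>star_def \<gamma> field_simps)
  show ?thesis
  proof (intro conjI impI ballI allI)
    fix x t assume "\<sigma> = 0 \<and> \<beta> = \<gamma>star" "t \<in> {0<..<T}"
    with \<gamma>star show "u x t \<le> Sup (range h) + t * (SUP s\<in>{0<..<T}. \<bar>chi s\<bar>)"
      by (intro le_initial_bound_add_time) auto
  next
    fix x t assume "0 < \<sigma> \<and> \<sigma> \<le> \<gamma> / 2 \<and> \<beta> = \<gamma>star" "t \<in> {0<..<T}"
    moreover have "1 < \<gamma>/2" using k1 \<gamma> by simp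
    ultimately show "u x t \<le> Sup (range h)"
      using \<gamma>star by (intro le_initial_bound[of "\<gamma>/2"]) auto
  next
    fix x t assume \<sigma>\<gamma>: "\<gamma> / 2 < \<sigma> \<and> \<beta> = \<sigma>star" and "t \<in> {0<..<T}"
    moreover have "1 < \<sigma>" using \<sigma>\<gamma> k1 \<gamma> by simp
    moreover have "1 \<le> \<sigma>star" "k1 * \<sigma>star \<le> k1 + 2" "\<sigma> * (\<sigma>star - 1) \<le> \<sigma>star"
      using \<sigma>\<gamma> k1 \<open>1 < \<sigma>\<close> by (auto simp: \<sigma>star_def \<gamma> field_simps)
    ultimately show "u x t \<le> Sup (range h)"
      by (intro le_initial_bound[of \<sigma>]) auto
  qed
qed

end
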